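(* There are no $x,y,z\in\mathcal{B}_2$ with $x+y+z=1$.
   Context: For irrational $x\in(0,1)$, $x=[a_1(x),a_2(x),\dots]$ denotes its simple continued fraction expansion. $\mathcal{B}_2$ is the set of irrational $x\in(0,1)$ with $a_k(x)\le 2$ for all $k\ge 1$. *)

theory Defs
  imports Complex_Main
begin

text \<open>Gauss map and continued fraction digits: for irrational x in (0,1),
  x = [a_1(x), a_2(x), ...] with a_k(x) = floor(1 / T^(k-1)(x)), T(x) = frac(1/x).\<close>

definition gauss_map :: "real \<Rightarrow> real" where
  "gauss_map x = frac (1 / x)"

definition cf_digit :: "real \<Rightarrow> nat \<Rightarrow> int" where
  "cf_digit x k = \<lfloor>1 / ((gauss_map ^^ (k - 1)) x)\<rfloor>"

definition B2 :: "real set" where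
  "B2 = {x. x \<notin> \<rat> \<and> 0 < x \<and> x < 1 \<and> (\<forall>k\<ge>1. cf_digit x k \<le> 2)}"

end

theory Submission
  imports Defs
begin

text \<open>A first continued fraction digit at most 2 forces x > 1/3, so three elements of
  B2 sum to more than 1.\<close>

lemma first_cf_digit_le_imp_gt:
  fixes x :: real and n :: int
  assumes "0 < x" and "cf_digit x 1 \<le> n"
  shows "1 / (n + 1) < x"
proof -
  have "\<lfloor>1 / x\<rfloor> \<le> n" using assms(2) by (simp add: cf_digit_def)
  hence inv_lt: "1 / x < n + 1" by linarith
  have "0 < 1 / x" using assms(1) by simp
  hence "0 < real_of_int n + 1" using inv_lt by linarith
  with assms(1) inv_lt show ?thesis by (simp add: field_simps)
qed

lemma B2_gt_one_third: "x \<in> B2 \<Longrightarrow> 1 / 3 < x"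
  using first_cf_digit_le_imp_gt[of x 2] by (simp add: B2_def)

theorem mainTheorem3:
  shows "\<not> (\<exists>x y z. x \<in> B2 \<and> y \<in> B2 \<and> z \<in> B2 \<and> x + y + z = 1)"
proof
  assume "\<exists>x y z. x \<in> B2 \<and> y \<in> B2 \<and> z \<in> B2 \<and> x + y + z = 1"
  then obtain x y z where "x \<in> B2" "y \<in> B2" "z \<in> B2" and sum: "x + y + z = 1" by blast
  hence "1 / 3 < x" "1 / 3 < y" "1 / 3 < z" using B2_gt_one_third by auto
  with sum show False by linarith
qed

end
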